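(* Let $\mathbb{X},\mathbb{Y}$ be finite-dimensional real Hilbert spaces, $f:\mathbb{X}\to(-\infty,\infty]$ and $g:\mathbb{Y}\to(-\infty,\infty]$ proper, convex and lower semicontinuous, $K:\mathbb{X}\to\mathbb{Y}$ linear, and $h:\mathbb{X}\to\mathbb{R}$ convex and differentiable with $\bar L$-Lipschitz gradient ($\bar L>0$). Let $(\tau_n)_{n\ge 0}$ be the primal stepsize sequence generated by the P-GRPDA algorithm described in the context, with parameters $\beta>0$, $\psi\in(1,\phi]$, $0<2\mu'<\mu<\psi/2$, $\tau_0>0$. Then $\tau_n\ge \eta:=\min\left\{\tau_0,\ \frac{\mu}{\sqrt{\beta}\|K\|},\ \frac{\mu'}{\bar L}\right\}$ for all $n$, and $\lim_{n\to\infty}\tau_n$ exists and satisfies $\lim_{n\to\infty}\tau_n\ge\eta>0$.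
   Context: $\phi=\frac{1+\sqrt5}{2}$; $\|K\|=\sup\{\|Kx\|:\|x\|=1\}$; $K^*$ is the adjoint of $K$; $g^*$ is the Fenchel conjugate of $g$; $\operatorname{prox}_{\lambda f}(x)=\arg\min_{u}\{f(u)+\frac{1}{2\lambda}\|u-x\|^2\}$. P-GRPDA: choose $x_0\in\mathbb{X}$, $y_0\in\mathbb{Y}$, set $z_0=x_0$, choose $\beta>0$, $\psi\in(1,\phi]$, $0<2\mu'<\mu<\psi/2$, $\tau_0>0$. For $n=1,2,\dots$: $z_n=\frac{\psi-1}{\psi}x_{n-1}+\frac1\psi z_{n-1}$; $x_n=\operatorname{prox}_{\tau_{n-1}f}\big(z_n-\tau_{n-1}K^*y_{n-1}-\tau_{n-1}\nabla h(x_{n-1})\big)$; $\tau_n=\min\left\{\tau_{n-1},\ \frac{\mu\|x_n-x_{n-1}\|}{\sqrt\beta\|Kx_n-Kx_{n-1}\|},\ \frac{\mu'\|x_n-x_{n-1}\|}{\|\nabla h(x_n)-\nabla h(x_{n-1})\|}\right\}$, $\sigma_n=\beta\tau_n$; $w_n=\operatorname{prox}_{\frac{1}{\sigma_n}g}\big(\frac{y_{n-1}}{\sigma_n}+Kx_n\big)$; $y_n=y_{n-1}+\sigma_n(Kx_n-w_n)$. Conventions in the $\tau_n$ update: $1/0=\infty$ (a term with zero denominator and nonzero numerator is ignored) and $0/0=\infty$ (so $\tau_n=\tau_{n-1}$ if $x_n=x_{n-1}$). *)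

theory Defs
  imports "HOL-Analysis.Analysis" "HOL-Library.Extended_Real"
begin

definition proper_fun :: "('a \<Rightarrow> ereal) \<Rightarrow> bool" where
  "proper_fun f \<longleftrightarrow> (\<forall>x. f x \<noteq> -\<infinity>) \<and> (\<exists>x. f x \<noteq> \<infinity>)"

definition convex_ext :: "('a::real_vector \<Rightarrow> ereal) \<Rightarrow> bool" where
  "convex_ext f \<longleftrightarrow> (\<forall>x y t. 0 < t \<and> t < 1 \<longrightarrow>
      f ((1 - t) *\<^sub>R x + t *\<^sub>R y) \<le> ereal (1 - t) * f x + ereal t * f y)"

definition lsc_ext :: "('a::topological_space \<Rightarrow> ereal) \<Rightarrow> bool" where
  "lsc_ext f \<longleftrightarrow> (\<forall>x X. X \<longlonglongrightarrow> x \<longrightarrow> f x \<le> liminf (\<lambda>n. f (X n)))"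

definition prox :: "real \<Rightarrow> ('a::real_normed_vector \<Rightarrow> ereal) \<Rightarrow> 'a \<Rightarrow> 'a" where
  "prox lam f x = (THE u. \<forall>v. f u + ereal (norm (u - x)^2 / (2 * lam))
                              \<le> f v + ereal (norm (v - x)^2 / (2 * lam)))"

definition ediv :: "real \<Rightarrow> real \<Rightarrow> ereal" where
  "ediv a b = (if b = 0 then \<infinity> else ereal (a / b))"

end

theory Submission
  imports Defs
begin

text \<open>Each candidate quotient in the stepsize rule is bounded below by a constant: the
  operator norm of K bounds the difference quotient of K, and L bounds that of the gradient.
  So every new stepsize is the minimum of its predecessor and something at least \<eta>;
  the stepsizes form a nonincreasing sequence bounded below by \<eta>, hence converge to a
  limit \<ge> \<eta>.\<close>

lemma ediv_pos: "0 < a \<Longrightarrow> 0 \<le> b \<Longrightarrow> 0 < ediv a b"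
  by (auto simp: ediv_def)

lemma ediv_le_ediv_mult:
  fixes a b c d :: real
  assumes "0 \<le> a" "0 \<le> b" "0 \<le> d" "d \<le> b * c"
  shows "ediv a b \<le> ediv (a * c) d"
proof (cases "d = 0")
  case False
  then have d: "0 < d"
    using assms(3) by simp
  with assms(4) have "0 < b * c"
    by linarith
  with assms(2) have "0 < b" "0 < c"
    by (auto simp: zero_less_mult_iff)
  moreover have "a * d \<le> a * (b * c)"
    using assms by (simp add: mult_left_mono)
  ultimately show ?thesis
    using d by (simp add: ediv_def divide_simps mult.commute mult.left_commute)
qed (simp add: ediv_def)

lemma ereal_real_of_ereal_min:
  "A \<noteq> -\<infinity> \<Longrightarrow> ereal (real_of_ereal (min (ereal t) A)) = min (ereal t) A"
  by (cases A) (auto simp: min_def)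

lemma min_stepsize_rule_bounded_convergent:
  fixes \<tau> :: "nat \<Rightarrow> real" and B :: "nat \<Rightarrow> ereal"
  assumes upd: "\<And>n. n \<ge> 1 \<Longrightarrow> \<tau> n = real_of_ereal (min (ereal (\<tau> (n - 1))) (B n))"
    and bound: "\<And>n. n \<ge> 1 \<Longrightarrow> ereal \<eta> \<le> B n"
    and start: "\<eta> \<le> \<tau> 0"
  shows "\<eta> \<le> \<tau> n" and "convergent \<tau>" and "\<eta> \<le> lim \<tau>"
proof -
  have step: "ereal (\<tau> (Suc n)) = min (ereal (\<tau> n)) (B (Suc n))" for n
  proof -
    have "B (Suc n) \<noteq> -\<infinity>"
      using bound[of "Suc n"] by auto
    then show ?thesis
      using upd[of "Suc n"] by (simp add: ereal_real_of_ereal_min)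
  qed
  have lower: "\<eta> \<le> \<tau> n" for n
  proof (induction n)
    case (Suc n)
    then have "ereal \<eta> \<le> min (ereal (\<tau> n)) (B (Suc n))"
      using bound[of "Suc n"] by simp
    then show ?case
      by (simp only: step[symmetric] ereal_less_eq)
  qed (use start in simp)
  have "decseq \<tau>"
  proof (rule decseq_SucI)
    fix n
    have "ereal (\<tau> (Suc n)) \<le> ereal (\<tau> n)"
      by (simp only: step min.cobounded1)
    then show "\<tau> (Suc n) \<le> \<tau> n" by simp
  qed
  then obtain l where l: "\<tau> \<longlonglongrightarrow> l"
    using decseq_convergent lower by blast
  show "\<eta> \<le> \<tau> n" by (fact lower)
  show "convergent \<tau>"
    using l by (auto simp: convergent_def)
  show "\<eta> \<le> lim \<tau>"
    using LIMSEQ_le_const[OF l] lower l by (simp add: limI)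
qed

theorem proposition3p1:
  fixes f :: "'a::euclidean_space \<Rightarrow> ereal"
    and g :: "'b::euclidean_space \<Rightarrow> ereal"
    and K :: "'a \<Rightarrow> 'b"
    and h :: "'a \<Rightarrow> real" and gradh :: "'a \<Rightarrow> 'a"
    and L \<beta> \<psi> \<mu> \<mu>' :: real
    and x z :: "nat \<Rightarrow> 'a" and y w :: "nat \<Rightarrow> 'b" and \<tau> \<sigma> :: "nat \<Rightarrow> real"
  assumes f: "proper_fun f" "convex_ext f" "lsc_ext f"
    and g: "proper_fun g" "convex_ext g" "lsc_ext g"
    and K: "linear K"
    and h_convex: "convex_on UNIV h"
    and h_grad: "\<And>u. (h has_derivative (\<lambda>v. gradh u \<bullet> v)) (at u)"
    and L_pos: "L > 0"
    and h_lip: "L-lipschitz_on UNIV gradh"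
    and \<beta>: "\<beta> > 0"
    and \<psi>: "1 < \<psi>" "\<psi> \<le> (1 + sqrt 5) / 2"
    and \<mu>: "0 < 2 * \<mu>'" "2 * \<mu>' < \<mu>" "\<mu> < \<psi> / 2"
    and \<tau>0: "\<tau> 0 > 0"
    and z0: "z 0 = x 0"
    and z_upd: "\<And>n. n \<ge> 1 \<Longrightarrow> z n = ((\<psi> - 1) / \<psi>) *\<^sub>R x (n - 1) + (1 / \<psi>) *\<^sub>R z (n - 1)"
    and x_upd: "\<And>n. n \<ge> 1 \<Longrightarrow> x n = prox (\<tau> (n - 1)) f
                  (z n - \<tau> (n - 1) *\<^sub>R adjoint K (y (n - 1)) - \<tau> (n - 1) *\<^sub>R gradh (x (n - 1)))"
    and \<tau>_upd: "\<And>n. n \<ge> 1 \<Longrightarrow> \<tau> n = real_of_ereal (min (ereal (\<tau> (n - 1)))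
                  (min (ediv (\<mu> * norm (x n - x (n - 1))) (sqrt \<beta> * norm (K (x n) - K (x (n - 1)))))
                       (ediv (\<mu>' * norm (x n - x (n - 1))) (norm (gradh (x n) - gradh (x (n - 1)))))))"
    and \<sigma>_upd: "\<And>n. n \<ge> 1 \<Longrightarrow> \<sigma> n = \<beta> * \<tau> n"
    and w_upd: "\<And>n. n \<ge> 1 \<Longrightarrow> w n = prox (1 / \<sigma> n) g ((1 / \<sigma> n) *\<^sub>R y (n - 1) + K (x n))"
    and y_upd: "\<And>n. n \<ge> 1 \<Longrightarrow> y n = y (n - 1) + \<sigma> n *\<^sub>R (K (x n) - w n)"
  shows "let \<eta> = real_of_ereal (min (ereal (\<tau> 0)) (min (ediv \<mu> (sqrt \<beta> * onorm K)) (ediv \<mu>' L)))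
         in (\<forall>n. \<tau> n \<ge> \<eta>) \<and> convergent \<tau> \<and> lim \<tau> \<ge> \<eta> \<and> \<eta> > 0"
proof -
  define E where "E = min (ediv \<mu> (sqrt \<beta> * onorm K)) (ediv \<mu>' L)"
  define \<eta> where "\<eta> = real_of_ereal (min (ereal (\<tau> 0)) E)"
  have K_bl: "bounded_linear K"
    using K by (simp add: linear_conv_bounded_linear)
  have "0 < E"
    using \<mu> \<beta> L_pos onorm_pos_le[OF K_bl] by (simp add: E_def ediv_pos)
  then have \<eta>_eq: "ereal \<eta> = min (ereal (\<tau> 0)) E"
    unfolding \<eta>_def by (simp add: ereal_real_of_ereal_min)
  have "0 < \<eta>"
    using \<eta>_eq \<open>0 < E\<close> \<tau>0 by (metis ereal_less(2) min_less_iff_conj)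
  have "\<eta> \<le> \<tau> 0" and \<eta>_le_E: "ereal \<eta> \<le> E"
    using \<eta>_eq by (metis ereal_less_eq(3) min.cobounded1, simp)
  have "ereal \<eta> \<le> min (ediv (\<mu> * norm (x n - x (n - 1))) (sqrt \<beta> * norm (K (x n) - K (x (n - 1)))))
                 (ediv (\<mu>' * norm (x n - x (n - 1))) (norm (gradh (x n) - gradh (x (n - 1)))))"
    (is "_ \<le> ?B") for n
  proof -
    have "sqrt \<beta> * norm (K (x n) - K (x (n - 1))) \<le> (sqrt \<beta> * onorm K) * norm (x n - x (n - 1))"
      using onorm[OF K_bl, of "x n - x (n - 1)"] \<beta>
      by (simp add: linear_diff[OF K] mult.assoc mult_left_mono)
    moreover have "norm (gradh (x n) - gradh (x (n - 1))) \<le> L * norm (x n - x (n - 1))"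
      using lipschitz_onD[OF h_lip] by (simp add: dist_norm)
    ultimately have "E \<le> ?B"
      unfolding E_def using \<mu> \<beta> L_pos onorm_pos_le[OF K_bl]
      by (intro min.mono ediv_le_ediv_mult) auto
    with \<eta>_le_E show ?thesis
      by (rule order_trans)
  qed
  note stepsizes = min_stepsize_rule_bounded_convergent[OF \<tau>_upd this \<open>\<eta> \<le> \<tau> 0\<close>]
  show ?thesis
    using stepsizes \<open>0 < \<eta>\<close> unfolding Let_def E_def[symmetric] \<eta>_def[symmetric] by blast
qed

end
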